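(* Let $x\in X$ and let $\mathcal{Q}=\{P_\alpha(x),P_\beta(y)\}$ be a plaque chain of length $1$, so that $h_{\mathcal{Q}}(x)=y$. Then for all $n>0$, $$\mu_{n-1}(x)\le \mu_n(y)\cdot h_{\mathcal{Q}}'(x)\le\mu_{n+1}(x).$$
   Context: $M$ is a closed Riemannian manifold with a codimension-one $C^1$-foliation $\mathcal{F}$ with oriented normal bundle. Fix a finite regular foliation atlas of transversally orientation-preserving charts $\varphi_\alpha\colon U_\alpha\to(-1,1)^n\times(-1,1)$ with transverse coordinate spaces $X_\alpha=(-1,1)$, and $X$ their disjoint union; $P_\alpha(x)$ is the plaque of $U_\alpha$ with transverse coordinate $x$. The transition map $h_{\beta\alpha}$ sends $x$ to $y$ when $P_\alpha(x)\cap P_\beta(y)\neq\emptyset$. A plaque chain $\mathcal{P}$ of length $\|\mathcal{P}\|=k$ is a sequence $P_{\alpha_0}(x_0),\dots,P_{\alpha_k}(x_k)$ of plaques with consecutive ones intersecting; its holonomy $h_{\mathcal{P}}=h_{\alpha_k\alpha_{k-1}}\circ\cdots\circ h_{\alpha_1\alpha_0}$ has maximal connected open domain $D_{\mathcal{P}}\ni x_0$ where all partial compositions are defined; derivatives are positive. Define $\mu_0(x)=1$ and, for $n\ge1$, $\mu_n(x)=\sup\{h_{\mathcal{P}}'(x): x\in D_{\mathcal{P}},\ \|\mathcal{P}\|\le n\}$. *)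

theory Defs
  imports "HOL-Analysis.Analysis" "HOL-Library.Extended_Real"
begin

text \<open>A chart with index a
  is an open set U a together with a map phi a : U a -> (-1,1)^n x (-1,1);
  the second component is the transverse coordinate.\<close>

definition open_cube :: "(real^'n) set" where
  "open_cube = {v. \<forall>i. -1 < v $ i \<and> v $ i < 1}"

definition plaque ::
  "('i \<Rightarrow> 'm set) \<Rightarrow> ('i \<Rightarrow> 'm \<Rightarrow> (real^'n) \<times> real) \<Rightarrow> 'i \<Rightarrow> real \<Rightarrow> 'm set" where
  "plaque U \<phi> a x = {p \<in> U a. snd (\<phi> a p) = x}"

text \<open>Domain and value of the transition map h_{b a}: x maps to y iff
  P_a(x) meets P_b(y).\<close>
definition tdom ::
  "('i \<Rightarrow> 'm set) \<Rightarrow> ('i \<Rightarrow> 'm \<Rightarrow> (real^'n) \<times> real) \<Rightarrow> 'i \<Rightarrow> 'i \<Rightarrow> real set" where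
  "tdom U \<phi> b a = {x. \<exists>y. plaque U \<phi> a x \<inter> plaque U \<phi> b y \<noteq> {}}"

definition trans ::
  "('i \<Rightarrow> 'm set) \<Rightarrow> ('i \<Rightarrow> 'm \<Rightarrow> (real^'n) \<times> real) \<Rightarrow> 'i \<Rightarrow> 'i \<Rightarrow> real \<Rightarrow> real" where
  "trans U \<phi> b a x = (THE y. plaque U \<phi> a x \<inter> plaque U \<phi> b y \<noteq> {})"

text \<open>Finite regular foliation atlas of transversally orientation-preserving
  charts of a codimension-one C^1 foliation on a closed manifold (only the
  structure used by the statement is recorded).\<close>
definition reg_fol_atlas ::
  "'i set \<Rightarrow> ('i \<Rightarrow> 'm::topological_space set) \<Rightarrow> ('i \<Rightarrow> 'm \<Rightarrow> (real^'n) \<times> real) \<Rightarrow> bool" where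
  "reg_fol_atlas A U \<phi> \<longleftrightarrow>
     compact (UNIV :: 'm set) \<and> finite A \<and> A \<noteq> {} \<and>
     (\<Union>a\<in>A. U a) = UNIV \<and>
     (\<forall>a\<in>A. open (U a) \<and>
        (\<exists>g. homeomorphism (U a) (open_cube \<times> {-1<..<1}) (\<phi> a) g)) \<and>
     \<comment> \<open>regularity: a plaque of one chart meets at most one plaque of another\<close>
     (\<forall>a\<in>A. \<forall>b\<in>A. \<forall>x y y'.
        plaque U \<phi> a x \<inter> plaque U \<phi> b y \<noteq> {} \<longrightarrow>
        plaque U \<phi> a x \<inter> plaque U \<phi> b y' \<noteq> {} \<longrightarrow> y = y') \<and>
     \<comment> \<open>transition maps are C^1 on open domains, with positive derivative\<close>
     (\<forall>a\<in>A. \<forall>b\<in>A. open (tdom U \<phi> b a) \<and>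
        (\<forall>x\<in>tdom U \<phi> b a. \<exists>d>0. (trans U \<phi> b a has_real_derivative d) (at x)) \<and>
        continuous_on (tdom U \<phi> b a) (deriv (trans U \<phi> b a)))"

text \<open>A plaque chain is a nonempty list of (chart index, transverse coordinate)
  pairs, i.e. plaques, with consecutive plaques intersecting.  Its length is
  the number of entries minus one.\<close>
definition plaque_chain ::
  "'i set \<Rightarrow> ('i \<Rightarrow> 'm set) \<Rightarrow> ('i \<Rightarrow> 'm \<Rightarrow> (real^'n) \<times> real) \<Rightarrow> ('i \<times> real) list \<Rightarrow> bool" where
  "plaque_chain A U \<phi> cs \<longleftrightarrow> cs \<noteq> [] \<and>
     (\<forall>c\<in>set cs. fst c \<in> A \<and> snd c \<in> {-1<..<1}) \<and>
     (\<forall>i. Suc i < length cs \<longrightarrow>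
        plaque U \<phi> (fst (cs ! i)) (snd (cs ! i)) \<inter>
        plaque U \<phi> (fst (cs ! Suc i)) (snd (cs ! Suc i)) \<noteq> {})"

definition chain_len :: "('i \<times> real) list \<Rightarrow> nat" where
  "chain_len cs = length cs - 1"

fun hol_ch ::
  "('i \<Rightarrow> 'm set) \<Rightarrow> ('i \<Rightarrow> 'm \<Rightarrow> (real^'n) \<times> real) \<Rightarrow> 'i list \<Rightarrow> real \<Rightarrow> real" where
  "hol_ch U \<phi> [] = id"
| "hol_ch U \<phi> [a] = id"
| "hol_ch U \<phi> (a # b # r) = hol_ch U \<phi> (b # r) \<circ> trans U \<phi> b a"

fun defd_ch ::
  "('i \<Rightarrow> 'm set) \<Rightarrow> ('i \<Rightarrow> 'm \<Rightarrow> (real^'n) \<times> real) \<Rightarrow> 'i list \<Rightarrow> real set" where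
  "defd_ch U \<phi> [] = {-1<..<1}"
| "defd_ch U \<phi> [a] = {-1<..<1}"
| "defd_ch U \<phi> (a # b # r) =
     {x \<in> tdom U \<phi> b a. trans U \<phi> b a x \<in> defd_ch U \<phi> (b # r)}"

definition hol ::
  "('i \<Rightarrow> 'm set) \<Rightarrow> ('i \<Rightarrow> 'm \<Rightarrow> (real^'n) \<times> real) \<Rightarrow> ('i \<times> real) list \<Rightarrow> real \<Rightarrow> real" where
  "hol U \<phi> cs = hol_ch U \<phi> (map fst cs)"

definition hol_dom ::
  "('i \<Rightarrow> 'm set) \<Rightarrow> ('i \<Rightarrow> 'm \<Rightarrow> (real^'n) \<times> real) \<Rightarrow> ('i \<times> real) list \<Rightarrow> real set" where
  "hol_dom U \<phi> cs =
     connected_component_set (defd_ch U \<phi> (map fst cs)) (snd (hd cs))"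

definition mu ::
  "'i set \<Rightarrow> ('i \<Rightarrow> 'm set) \<Rightarrow> ('i \<Rightarrow> 'm \<Rightarrow> (real^'n) \<times> real) \<Rightarrow> nat \<Rightarrow> 'i \<Rightarrow> real \<Rightarrow> ereal" where
  "mu A U \<phi> n a x =
     (if n = 0 then 1 else
      (SUP cs \<in> {cs. plaque_chain A U \<phi> cs \<and> chain_len cs \<le> n \<and>
                    fst (hd cs) = a \<and> x \<in> hol_dom U \<phi> cs}.
         ereal (deriv (hol U \<phi> cs) x)))"

end

theory Submission
  imports Defs
begin

text \<open>Because the atlas is regular, the holonomy of a plaque chain, its domain and hence its
  derivative are determined by the underlying sequence of charts and the starting point.
  So \<open>\<mu>\<^sub>n(x)\<close> is a supremum over chart sequences of length at most \<open>n + 1\<close> that start at the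
  chart of \<open>x\<close> and along which \<open>x\<close> can be transported.  Prepending the chart \<open>\<alpha>\<close> to such a
  sequence for \<open>y = h\<^sub>\<beta>\<^sub>\<alpha>(x)\<close> gives, by the chain rule, \<open>\<mu>\<^sub>n(y) h\<^sub>\<beta>\<^sub>\<alpha>'(x) \<le> \<mu>\<^sub>n\<^sub>+\<^sub>1(x)\<close>.
  The same bound for the inverse transition \<open>h\<^sub>\<alpha>\<^sub>\<beta>\<close>, whose derivative at \<open>y\<close> is
  \<open>1 / h\<^sub>\<beta>\<^sub>\<alpha>'(x)\<close>, gives the lower inequality.\<close>

lemma all_nat_split: "(\<forall>i::nat. P i) \<longleftrightarrow> P 0 \<and> (\<forall>i. P (Suc i))"
  by (metis not0_implies_Suc)

lemma plaque_chain_Cons_Cons: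
  "plaque_chain A U \<phi> (c # d # r) \<longleftrightarrow>
     fst c \<in> A \<and> snd c \<in> {-1<..<1} \<and>
     plaque U \<phi> (fst c) (snd c) \<inter> plaque U \<phi> (fst d) (snd d) \<noteq> {} \<and>
     plaque_chain A U \<phi> (d # r)"
  unfolding plaque_chain_def by (subst all_nat_split) auto

lemma plaque_chain_single: "plaque_chain A U \<phi> [(a, x)] \<longleftrightarrow> a \<in> A \<and> x \<in> {-1<..<1}"
  unfolding plaque_chain_def by auto

lemma trans_eqI:
  assumes "reg_fol_atlas A U \<phi>" "a \<in> A" "b \<in> A"
    and "plaque U \<phi> a x \<inter> plaque U \<phi> b y \<noteq> {}"
  shows "trans U \<phi> b a x = y"
  unfolding trans_def
proof (rule the_equality)
  fix y' assume "plaque U \<phi> a x \<inter> plaque U \<phi> b y' \<noteq> {}"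
  with assms show "y' = y" unfolding reg_fol_atlas_def by blast
qed (fact assms(4))

lemma plaque_meets_trans:
  assumes "reg_fol_atlas A U \<phi>" "a \<in> A" "b \<in> A" "x \<in> tdom U \<phi> b a"
  shows "plaque U \<phi> a x \<inter> plaque U \<phi> b (trans U \<phi> b a x) \<noteq> {}"
proof -
  from assms(4) obtain y where y: "plaque U \<phi> a x \<inter> plaque U \<phi> b y \<noteq> {}"
    unfolding tdom_def by blast
  with trans_eqI[OF assms(1-3) y] show ?thesis by simp
qed

lemma trans_in_tdom_inverse:
  assumes "reg_fol_atlas A U \<phi>" "a \<in> A" "b \<in> A" "x \<in> tdom U \<phi> b a"
  shows "trans U \<phi> b a x \<in> tdom U \<phi> a b"
    and "trans U \<phi> a b (trans U \<phi> b a x) = x"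
proof -
  have meet: "plaque U \<phi> b (trans U \<phi> b a x) \<inter> plaque U \<phi> a x \<noteq> {}"
    using plaque_meets_trans[OF assms] by blast
  then show "trans U \<phi> b a x \<in> tdom U \<phi> a b" unfolding tdom_def by blast
  show "trans U \<phi> a b (trans U \<phi> b a x) = x" by (rule trans_eqI[OF assms(1,3,2) meet])
qed

lemma plaque_nonempty_imp_coord:
  assumes "reg_fol_atlas A U \<phi>" "a \<in> A" "plaque U \<phi> a x \<noteq> {}"
  shows "x \<in> {-1<..<1}"
proof -
  from assms(3) obtain p where p: "p \<in> U a" "snd (\<phi> a p) = x" unfolding plaque_def by blast
  from assms(1,2) obtain g where "homeomorphism (U a) (open_cube \<times> {-1<..<1}) (\<phi> a) g"
    unfolding reg_fol_atlas_def by blast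
  then have "\<phi> a ` U a = open_cube \<times> {-1<..<1}" unfolding homeomorphism_def by blast
  with p have "\<phi> a p \<in> open_cube \<times> {-1<..<1}" by blast
  with p show ?thesis by auto
qed

lemma tdom_subset_coords:
  assumes "reg_fol_atlas A U \<phi>" "a \<in> A" "x \<in> tdom U \<phi> b a"
  shows "x \<in> {-1<..<1}"
proof -
  from assms(3) have "plaque U \<phi> a x \<noteq> {}" unfolding tdom_def by blast
  then show ?thesis by (rule plaque_nonempty_imp_coord[OF assms(1,2)])
qed

lemma trans_has_pos_deriv:
  assumes "reg_fol_atlas A U \<phi>" "a \<in> A" "b \<in> A" "x \<in> tdom U \<phi> b a"
  obtains d where "d > 0" "(trans U \<phi> b a has_real_derivative d) (at x)"
  using assms unfolding reg_fol_atlas_def by blast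

lemma deriv_trans_pos:
  assumes "reg_fol_atlas A U \<phi>" "a \<in> A" "b \<in> A" "x \<in> tdom U \<phi> b a"
  shows "deriv (trans U \<phi> b a) x > 0"
  using trans_has_pos_deriv[OF assms] DERIV_imp_deriv by metis

lemma trans_field_differentiable:
  assumes "reg_fol_atlas A U \<phi>" "a \<in> A" "b \<in> A" "x \<in> tdom U \<phi> b a"
  shows "trans U \<phi> b a field_differentiable (at x)"
  using trans_has_pos_deriv[OF assms] field_differentiable_def by metis

lemma deriv_trans_inverse:
  assumes "reg_fol_atlas A U \<phi>" "a \<in> A" "b \<in> A" "x \<in> tdom U \<phi> b a"
  shows "deriv (trans U \<phi> a b) (trans U \<phi> b a x) * deriv (trans U \<phi> b a) x = 1"
proof -
  have y: "trans U \<phi> b a x \<in> tdom U \<phi> a b" by (rule trans_in_tdom_inverse(1)[OF assms])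
  have "open (tdom U \<phi> b a)" using assms unfolding reg_fol_atlas_def by blast
  with DERIV_ident have "(trans U \<phi> a b \<circ> trans U \<phi> b a has_real_derivative 1) (at x)"
    by (rule has_field_derivative_transform_within_open[OF _ _ assms(4)])
       (simp add: trans_in_tdom_inverse(2)[OF assms(1-3)])
  then have "deriv (trans U \<phi> a b \<circ> trans U \<phi> b a) x = 1" by (rule DERIV_imp_deriv)
  then show ?thesis
    using deriv_chain[OF trans_field_differentiable[OF assms]
        trans_field_differentiable[OF assms(1,3,2) y]] by simp
qed

lemma defd_ch_subset_coords:
  assumes "reg_fol_atlas A U \<phi>" "set l \<subseteq> A" "x \<in> defd_ch U \<phi> l"
  shows "x \<in> {-1<..<1}"
  using assms
proof (induction U \<phi> l rule: defd_ch.induct)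
  case (3 U \<phi> a b r)
  then show ?case using tdom_subset_coords[OF "3.prems"(1)] by auto
qed auto

lemma hol_ch_field_differentiable:
  assumes "reg_fol_atlas A U \<phi>" "set l \<subseteq> A" "x \<in> defd_ch U \<phi> l"
  shows "hol_ch U \<phi> l field_differentiable (at x)"
  using assms
proof (induction U \<phi> l arbitrary: x rule: hol_ch.induct)
  case (3 U \<phi> a b r)
  then have "trans U \<phi> b a field_differentiable (at x)"
    and "hol_ch U \<phi> (b # r) field_differentiable (at (trans U \<phi> b a x))"
    by (auto intro: trans_field_differentiable)
  then show ?case by (simp only: hol_ch.simps field_differentiable_compose)
qed auto

lemma deriv_hol_ch_Cons_Cons:
  assumes "reg_fol_atlas A U \<phi>" "set (a # b # r) \<subseteq> A"
    and "x \<in> defd_ch U \<phi> (a # b # r)"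
  shows "deriv (hol_ch U \<phi> (a # b # r)) x
           = deriv (hol_ch U \<phi> (b # r)) (trans U \<phi> b a x) * deriv (trans U \<phi> b a) x"
  using assms
  by (auto intro!: deriv_chain trans_field_differentiable hol_ch_field_differentiable)

fun chain_along ::
  "('i \<Rightarrow> 'm set) \<Rightarrow> ('i \<Rightarrow> 'm \<Rightarrow> (real^'n) \<times> real) \<Rightarrow> 'i list \<Rightarrow> real \<Rightarrow> ('i \<times> real) list"
where
  "chain_along U \<phi> [] x = []"
| "chain_along U \<phi> [a] x = [(a, x)]"
| "chain_along U \<phi> (a # b # r) x = (a, x) # chain_along U \<phi> (b # r) (trans U \<phi> b a x)"

lemma map_fst_chain_along [simp]: "map fst (chain_along U \<phi> l x) = l"
  by (induction U \<phi> l x rule: chain_along.induct) auto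

lemma length_chain_along: "length (chain_along U \<phi> l x) = length l"
  by (metis length_map map_fst_chain_along)

lemma hd_chain_along: "l \<noteq> [] \<Longrightarrow> hd (chain_along U \<phi> l x) = (hd l, x)"
  by (induction U \<phi> l x rule: chain_along.induct) auto

lemma plaque_chain_chain_along:
  assumes "reg_fol_atlas A U \<phi>" "l \<noteq> []" "set l \<subseteq> A" "x \<in> defd_ch U \<phi> l"
  shows "plaque_chain A U \<phi> (chain_along U \<phi> l x)"
  using assms
proof (induction U \<phi> l x rule: chain_along.induct)
  case (2 U \<phi> a x)
  then show ?case by (simp add: plaque_chain_single)
next
  case (3 U \<phi> a b r x)
  define y where "y = trans U \<phi> b a x"
  obtain t where t: "chain_along U \<phi> (b # r) y = (b, y) # t"
    by (cases r) auto
  have "plaque_chain A U \<phi> ((b, y) # t)" using 3 t by (simp add: y_def)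
  moreover have "plaque U \<phi> a x \<inter> plaque U \<phi> b y \<noteq> {}"
    using 3 plaque_meets_trans[OF "3.prems"(1)] by (simp add: y_def)
  moreover have "x \<in> {-1<..<1}" using 3 by (intro defd_ch_subset_coords)
  ultimately show ?case using 3 t by (simp add: plaque_chain_Cons_Cons y_def)
qed auto

definition chart_seqs ::
  "'i set \<Rightarrow> ('i \<Rightarrow> 'm set) \<Rightarrow> ('i \<Rightarrow> 'm \<Rightarrow> (real^'n) \<times> real) \<Rightarrow> nat \<Rightarrow> 'i \<Rightarrow> real \<Rightarrow> 'i list set"
where
  "chart_seqs A U \<phi> n a x =
     {l. l \<noteq> [] \<and> set l \<subseteq> A \<and> hd l = a \<and> length l \<le> Suc n \<and> x \<in> defd_ch U \<phi> l}"

lemma chart_seqs_0: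
  assumes "a \<in> A" "x \<in> {-1<..<1}"
  shows "chart_seqs A U \<phi> 0 a x = {[a]}"
proof -
  have "l = [a]" if "l \<noteq> []" "hd l = a" "length l \<le> 1" for l
    using that by (cases l) auto
  then show ?thesis using assms unfolding chart_seqs_def by auto
qed

lemma chart_seqs_eq_charts_of_chains:
  assumes "reg_fol_atlas A U \<phi>"
  shows "chart_seqs A U \<phi> n a x = map fst ` {cs. plaque_chain A U \<phi> cs \<and> chain_len cs \<le> n \<and>
                                         fst (hd cs) = a \<and> x \<in> hol_dom U \<phi> cs}"
    (is "_ = map fst ` ?C")
proof
  show "map fst ` ?C \<subseteq> chart_seqs A U \<phi> n a x"
  proof (rule image_subsetI)
    fix cs assume "cs \<in> ?C"
    then have cs: "plaque_chain A U \<phi> cs" "chain_len cs \<le> n" "fst (hd cs) = a"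
      "x \<in> hol_dom U \<phi> cs"
      by auto
    have "x \<in> defd_ch U \<phi> (map fst cs)"
      using cs(4) connected_component_subset unfolding hol_dom_def by blast
    moreover have "cs \<noteq> []" "set (map fst cs) \<subseteq> A"
      using cs(1) unfolding plaque_chain_def by auto
    ultimately show "map fst cs \<in> chart_seqs A U \<phi> n a x"
      using cs(2,3) unfolding chart_seqs_def chain_len_def by (auto simp: hd_map)
  qed
next
  show "chart_seqs A U \<phi> n a x \<subseteq> map fst ` ?C"
  proof
    fix l assume "l \<in> chart_seqs A U \<phi> n a x"
    then have l: "l \<noteq> []" "set l \<subseteq> A" "hd l = a" "length l \<le> Suc n"
      "x \<in> defd_ch U \<phi> l"
      unfolding chart_seqs_def by auto
    then have "x \<in> hol_dom U \<phi> (chain_along U \<phi> l x)"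
      by (simp add: hol_dom_def hd_chain_along connected_component_refl_eq)
    then have "chain_along U \<phi> l x \<in> ?C"
      using plaque_chain_chain_along[OF assms l(1,2,5)] l
      by (simp add: chain_len_def hd_chain_along length_chain_along)
    then show "l \<in> map fst ` ?C" by (rule rev_image_eqI) simp
  qed
qed

lemma mu_eq_SUP_chart_seqs:
  assumes "reg_fol_atlas A U \<phi>" "a \<in> A" "x \<in> {-1<..<1}"
  shows "mu A U \<phi> n a x = (SUP l \<in> chart_seqs A U \<phi> n a x. ereal (deriv (hol_ch U \<phi> l) x))"
proof (cases "n = 0")
  case True
  have "deriv (hol_ch U \<phi> [a]) x = 1" by (simp add: DERIV_imp_deriv id_def)
  then show ?thesis using True chart_seqs_0[OF assms(2,3), of U \<phi>] unfolding mu_def by simp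
next
  case False
  then show ?thesis
    unfolding mu_def hol_def chart_seqs_eq_charts_of_chains[OF assms(1)]
    by (simp add: image_comp o_def)
qed

lemma mu_mult_deriv_trans_le:
  assumes R: "reg_fol_atlas A U \<phi>" and ab: "a \<in> A" "b \<in> A" and x: "x \<in> tdom U \<phi> b a"
  shows "mu A U \<phi> n b (trans U \<phi> b a x) * ereal (deriv (trans U \<phi> b a) x)
           \<le> mu A U \<phi> (Suc n) a x"
proof -
  define y where "y = trans U \<phi> b a x"
  define d where "d = deriv (trans U \<phi> b a) x"
  have y: "y \<in> tdom U \<phi> a b" using trans_in_tdom_inverse(1)[OF R ab x] by (simp add: y_def)
  have y_coord: "y \<in> {-1<..<1}" by (rule tdom_subset_coords[OF R ab(2) y])
  have "[b] \<in> chart_seqs A U \<phi> n b y" using ab y_coord by (simp add: chart_seqs_def)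
  then have "mu A U \<phi> n b y * ereal d
               = (SUP l \<in> chart_seqs A U \<phi> n b y. ereal (deriv (hol_ch U \<phi> l) y) * ereal d)"
    unfolding mu_eq_SUP_chart_seqs[OF R ab(2) y_coord]
    using deriv_trans_pos[OF R ab x] by (intro Sup_ereal_mult_right') (auto simp: d_def)
  also have "\<dots> \<le> mu A U \<phi> (Suc n) a x"
    unfolding mu_eq_SUP_chart_seqs[OF R ab(1) tdom_subset_coords[OF R ab(1) x]]
  proof (rule SUP_least)
    fix l assume l: "l \<in> chart_seqs A U \<phi> n b y"
    then obtain r where lr: "l = b # r" by (cases l) (auto simp: chart_seqs_def)
    have al: "a # l \<in> chart_seqs A U \<phi> (Suc n) a x"
      using l x ab unfolding chart_seqs_def lr y_def by auto
    then have "ereal (deriv (hol_ch U \<phi> l) y) * ereal d = ereal (deriv (hol_ch U \<phi> (a # l)) x)"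
      using deriv_hol_ch_Cons_Cons[OF R, of a b r x] unfolding chart_seqs_def lr y_def d_def
      by simp
    also have "\<dots> \<le> (SUP l \<in> chart_seqs A U \<phi> (Suc n) a x. ereal (deriv (hol_ch U \<phi> l) x))"
      by (rule SUP_upper[OF al])
    finally show "ereal (deriv (hol_ch U \<phi> l) y) * ereal d \<le> \<dots>" .
  qed
  finally show ?thesis by (simp add: y_def d_def)
qed

theorem lemma4p1:
  fixes A :: "'i set" and U :: "'i \<Rightarrow> 'm::topological_space set"
    and \<phi> :: "'i \<Rightarrow> 'm \<Rightarrow> (real^'n) \<times> real"
    and a b :: 'i and x y :: real and n :: nat
  assumes "reg_fol_atlas A U \<phi>"
    and "plaque_chain A U \<phi> [(a, x), (b, y)]"
    and "n > 0"
  shows "mu A U \<phi> (n - 1) a x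
           \<le> mu A U \<phi> n b y * ereal (deriv (hol U \<phi> [(a, x), (b, y)]) x)
       \<and> mu A U \<phi> n b y * ereal (deriv (hol U \<phi> [(a, x), (b, y)]) x)
           \<le> mu A U \<phi> (n + 1) a x"
proof -
  note R = assms(1)
  have ab: "a \<in> A" "b \<in> A" and meet: "plaque U \<phi> a x \<inter> plaque U \<phi> b y \<noteq> {}"
    using assms(2) by (auto simp: plaque_chain_Cons_Cons plaque_chain_single)
  have x: "x \<in> tdom U \<phi> b a" using meet unfolding tdom_def by blast
  have hxy: "trans U \<phi> b a x = y" by (rule trans_eqI[OF R ab meet])
  have y: "y \<in> tdom U \<phi> a b" and hyx: "trans U \<phi> a b y = x"
    using trans_in_tdom_inverse[OF R ab x] hxy by auto
  define d where "d = deriv (trans U \<phi> b a) x"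
  define e where "e = deriv (trans U \<phi> a b) y"
  have "e * d = 1" using deriv_trans_inverse[OF R ab x] by (simp add: hxy d_def e_def)
  have "mu A U \<phi> (n - 1) a x = mu A U \<phi> (n - 1) a x * ereal e * ereal d"
    using \<open>e * d = 1\<close> by (simp add: mult.assoc)
  also have "\<dots> \<le> mu A U \<phi> n b y * ereal d"
    using mu_mult_deriv_trans_le[OF R ab(2,1) y, of "n - 1"] deriv_trans_pos[OF R ab x] assms(3)
    by (intro ereal_mult_right_mono) (simp_all add: hyx e_def d_def)
  finally have lower: "mu A U \<phi> (n - 1) a x \<le> mu A U \<phi> n b y * ereal d" .
  have upper: "mu A U \<phi> n b y * ereal d \<le> mu A U \<phi> (n + 1) a x"
    using mu_mult_deriv_trans_le[OF R ab x, of n] by (simp add: hxy d_def)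
  have "hol U \<phi> [(a, x), (b, y)] = trans U \<phi> b a" by (simp add: hol_def)
  then show ?thesis using lower upper by (simp add: d_def)
qed

end
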